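(* Let $c\ge 0$ and consider the planar polynomial system $$\dot x=x(1-y+cx),\qquad \dot y=y(-1+x).$$ The unique irreducible Darboux polynomials of this system with non-zero cofactors are $x$ and $y$.
   Context: For the vector field $\mathcal{Z}=x(1-y+cx)\partial_x+y(-1+x)\partial_y$, a Darboux polynomial is $f\in\mathbb{C}[x,y]$ with $\mathcal{Z}f=kf$ for some polynomial $k$ (the cofactor), necessarily of degree at most one. *)

theory Defs
  imports Complex_Main "HOL-Computational_Algebra.Computational_Algebra"
begin

text \<open>Bivariate polynomials in C[x,y] are represented as \<open>complex poly poly\<close>:
  polynomials in y whose coefficients are polynomials in x.\<close>

definition px :: "complex poly poly" where
  "px = [:[:0, 1:]:]"

definition py :: "complex poly poly" where
  "py = [:0, 1:]"

definition pconst :: "complex \<Rightarrow> complex poly poly" where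
  "pconst a = [:[:a:]:]"

definition pdx :: "complex poly poly \<Rightarrow> complex poly poly" where
  "pdx f = map_poly pderiv f"

definition pdy :: "complex poly poly \<Rightarrow> complex poly poly" where
  "pdy f = pderiv f"

definition Zfield :: "real \<Rightarrow> complex poly poly \<Rightarrow> complex poly poly" where
  "Zfield c f = px * (1 - py + pconst (complex_of_real c) * px) * pdx f
                + py * (-1 + px) * pdy f"

definition darboux :: "real \<Rightarrow> complex poly poly \<Rightarrow> complex poly poly \<Rightarrow> bool" where
  "darboux c f k \<longleftrightarrow> f \<noteq> 0 \<and> Zfield c f = k * f"

end

theory Submission
  imports Defs
begin

text \<open>Write \<open>f = \<Sum>i. a\<^sub>i(x) y\<^sup>i\<close> and restrict the Darboux equation \<open>Z f = k f\<close> to the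
  invariant lines. On \<open>x = 0\<close> the field is \<open>-y \<partial>\<^sub>y\<close>, so \<open>p = f(0,y)\<close> satisfies
  \<open>-y p' = k(0,y) p\<close>: comparing degrees makes \<open>k(0,y)\<close> a constant \<open>\<kappa>\<close>, and comparing
  lowest-order terms gives \<open>\<kappa> = -ord\<^sub>0 p\<close>. On \<open>y = 0\<close> the field is \<open>x(1+cx) \<partial>\<^sub>x\<close>, and the
  same comparison for \<open>f(x,0)\<close> gives \<open>\<kappa> = ord\<^sub>0 f(x,0)\<close>. If neither \<open>x\<close> nor \<open>y\<close> divides \<open>f\<close>,
  both restrictions are nonzero, so \<open>\<kappa> = 0\<close> and \<open>p\<close> is constant. The top coefficient \<open>a\<^sub>N\<close>
  then satisfies \<open>-x a\<^sub>N' = k\<^sub>1 a\<^sub>N\<close> with \<open>x\<close> dividing \<open>k\<^sub>1\<close>, so \<open>a\<^sub>N\<close> divides its own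
  derivative and is a nonzero constant; as it is also the top coefficient of \<open>p\<close>, \<open>N = 0\<close> and
  \<open>f\<close> is constant. Hence an irreducible Darboux polynomial is an associate of \<open>x\<close> or \<open>y\<close>.\<close>

lemma order_0_mult_pderiv_eq:
  fixes p r k :: "'a::idom poly"
  assumes eq: "[:0, 1:] * r * pderiv p = k * p" and "p \<noteq> 0"
  shows "of_nat (order 0 p) * poly r 0 = poly k 0"
proof -
  define m where "m = order 0 p"
  obtain q where p: "p = [:0, 1:] ^ m * q" and "\<not> [:0, 1:] dvd q"
    using order_decomp[OF \<open>p \<noteq> 0\<close>, of 0] by (auto simp: m_def)
  then have q0: "poly q 0 \<noteq> 0"
    using dvd_iff_poly_eq_0[of 0 q] by simp
  have deriv: "[:0, 1:] * pderiv p = [:0, 1:] ^ m * (smult (of_nat m) q + [:0, 1:] * pderiv q)"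
    by (cases m) (simp_all add: p pderiv_mult pderiv_power_Suc del: power_Suc,
        simp add: algebra_simps pderiv_pCons)
  have "[:0, 1:] ^ m * (r * (smult (of_nat m) q + [:0, 1:] * pderiv q)) = r * ([:0, 1:] * pderiv p)"
    unfolding deriv by (rule mult.left_commute)
  also have "\<dots> = k * p"
    using eq by (metis mult.assoc mult.commute)
  also have "\<dots> = [:0, 1:] ^ m * (k * q)"
    unfolding p by (rule mult.left_commute)
  finally have "[:0, 1:] ^ m * (r * (smult (of_nat m) q + [:0, 1:] * pderiv q)) = [:0, 1:] ^ m * (k * q)" .
  then have "r * (smult (of_nat m) q + [:0, 1:] * pderiv q) = k * q"
    by simp
  then have "poly (r * (smult (of_nat m) q + [:0, 1:] * pderiv q)) 0 = poly (k * q) 0"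
    by (rule arg_cong)
  then have "poly r 0 * (of_nat m * poly q 0) = poly k 0 * poly q 0"
    by simp
  with q0 show ?thesis
    by (simp add: m_def mult.commute)
qed

lemma irreducible_linear_poly_unit_lead:
  fixes a b :: "'a::{idom_divide, algebraic_semidom}"
  assumes "is_unit b"
  shows "irreducible [:a, b:]"
proof (rule irreducibleI)
  fix p q assume pq: "[:a, b:] = p * q"
  have "b \<noteq> 0"
    using assms by auto
  with pq have "p \<noteq> 0" and "q \<noteq> 0"
    by auto
  moreover have "degree (p * q) = 1"
    using \<open>b \<noteq> 0\<close> unfolding pq[symmetric] by simp
  ultimately have "degree p + degree q = 1"
    by (simp add: degree_mult_eq)
  moreover have "lead_coeff p * lead_coeff q = b"
    using \<open>b \<noteq> 0\<close> unfolding lead_coeff_mult[symmetric] pq[symmetric] by simp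
  then have "is_unit (lead_coeff p)" and "is_unit (lead_coeff q)"
    using assms by (auto simp: is_unit_mult_iff)
  ultimately have "degree p = 0 \<and> is_unit (lead_coeff p) \<or> degree q = 0 \<and> is_unit (lead_coeff q)"
    by auto
  then show "is_unit p \<or> is_unit q"
    by (auto simp: is_unit_poly_iff elim!: degree_eq_zeroE)
qed (use assms in \<open>auto simp: is_unit_poly_iff\<close>)

lemma px_mult: "px * q = smult [:0, 1:] q"
  by (simp add: px_def)

lemma py_mult: "py * q = pCons 0 q"
  by (simp add: py_def)

lemma pconst_mult: "pconst a * q = smult [:a:] q"
  by (simp add: pconst_def)

lemma Zfield_eq:
  "Zfield c f = smult [:0, 1, complex_of_real c:] (pdx f) - pCons 0 (smult [:0, 1:] (pdx f))
     + smult [:-1, 1:] (pCons 0 (pdy f))"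
proof -
  have "px * (1 - py + pconst (complex_of_real c) * px) * pdx f
     = px * pdx f - px * (py * pdx f) + pconst (complex_of_real c) * (px * (px * pdx f))"
    by (simp add: algebra_simps)
  also have "\<dots> = smult [:0, 1, complex_of_real c:] (pdx f) - pCons 0 (smult [:0, 1:] (pdx f))"
    by (simp add: px_mult py_mult pconst_mult smult_diff_right flip: smult_add_left)
  finally have x_part: "px * (1 - py + pconst (complex_of_real c) * px) * pdx f = \<dots>" .
  have "-1 + px = [:[:-1, 1:]:]"
    by (simp add: px_def one_pCons)
  then have y_part: "py * (-1 + px) * pdy f = smult [:-1, 1:] (pCons 0 (pdy f))"
    by (simp add: py_mult)
  show ?thesis
    unfolding Zfield_def x_part y_part ..
qed

lemma coeff_Zfield_0:
  "coeff (Zfield c f) 0 = [:0, 1:] * [:1, complex_of_real c:] * pderiv (coeff f 0)"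
  by (simp add: Zfield_eq pdx_def coeff_map_poly)

lemma coeff_Zfield_Suc:
  "coeff (Zfield c f) (Suc i) = [:0, 1, complex_of_real c:] * pderiv (coeff f (Suc i))
     - [:0, 1:] * pderiv (coeff f i) + smult (of_nat (Suc i)) ([:-1, 1:] * coeff f (Suc i))"
  by (simp add: Zfield_eq pdx_def pdy_def coeff_map_poly coeff_pderiv of_nat_poly algebra_simps)

lemma degree_Zfield_le: "degree (Zfield c f) \<le> degree f + 1"
proof (rule degree_le, intro allI impI)
  fix i assume "degree f + 1 < i"
  then obtain j where "i = Suc j" "degree f < j"
    by (cases i) auto
  then show "coeff (Zfield c f) i = 0"
    by (simp add: coeff_Zfield_Suc coeff_eq_0)
qed

lemma darboux_degree_cofactor_le:
  assumes "darboux c f k"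
  shows "degree k \<le> 1"
proof (cases "k = 0")
  case False
  with assms have "degree (Zfield c f) = degree k + degree f"
    by (simp add: darboux_def degree_mult_eq)
  with degree_Zfield_le[of c f] show ?thesis
    by simp
qed simp

definition eval_x0 :: "'a::comm_semiring_1 poly poly \<Rightarrow> 'a poly" where
  "eval_x0 f = map_poly (\<lambda>a. poly a 0) f"

lemma coeff_eval_x0 [simp]: "coeff (eval_x0 f) i = poly (coeff f i) 0"
  by (simp add: eval_x0_def coeff_map_poly)

lemma eval_x0_mult: "eval_x0 (p * q) = eval_x0 p * eval_x0 q"
  by (rule poly_eqI) (simp add: coeff_mult poly_sum)

lemma eval_x0_Zfield: "eval_x0 (Zfield c f) = - [:0, 1:] * pderiv (eval_x0 f)"
proof (rule poly_eqI)
  fix i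
  show "coeff (eval_x0 (Zfield c f)) i = coeff (- [:0, 1:] * pderiv (eval_x0 f)) i"
    by (cases i) (simp_all add: coeff_Zfield_0 coeff_Zfield_Suc coeff_pderiv algebra_simps)
qed

lemma px_dvd_iff_eval_x0_eq_0: "px dvd f \<longleftrightarrow> eval_x0 f = 0"
  by (simp add: px_def const_poly_dvd_iff dvd_iff_poly_eq_0[of 0] poly_eq_iff)

lemma py_dvd_iff_coeff_0_eq_0: "py dvd f \<longleftrightarrow> coeff f 0 = 0"
  using dvd_iff_poly_eq_0[of 0 f] by (simp add: py_def poly_0_coeff_0)

lemma darboux_eval_x0_cofactor:
  assumes "darboux c f k" and "\<not> px dvd f"
  shows "eval_x0 k = [:- of_nat (order 0 (eval_x0 f)):]"
proof -
  let ?p = "eval_x0 f" and ?k = "eval_x0 k"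
  have p0: "?p \<noteq> 0"
    using assms(2) by (simp add: px_dvd_iff_eval_x0_eq_0)
  have eq: "- [:0, 1:] * pderiv ?p = ?k * ?p"
    using assms(1) by (metis darboux_def eval_x0_Zfield eval_x0_mult)
  have "degree ?k = 0"
  proof (rule ccontr)
    assume "degree ?k \<noteq> 0"
    have "degree (- [:0, 1:] * pderiv ?p) \<le> degree ?p"
    proof (cases "pderiv ?p = 0")
      case False
      then have "degree ?p \<noteq> 0"
        using pderiv_eq_0_iff by blast
      then show ?thesis
        using degree_mult_le[of "- [:0, 1:]" "pderiv ?p"] by (simp add: degree_pderiv)
    qed simp
    then have "degree (?k * ?p) \<le> degree ?p"
      by (simp only: eq)
    moreover have "degree (?k * ?p) = degree ?k + degree ?p"
      using p0 \<open>degree ?k \<noteq> 0\<close> by (intro degree_mult_eq) auto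
    ultimately show False
      using \<open>degree ?k \<noteq> 0\<close> by simp
  qed
  then obtain \<kappa> where k: "?k = [:\<kappa>:]"
    by (elim degree_eq_zeroE)
  with eq have "[:0, 1:] * (- 1) * pderiv ?p = [:\<kappa>:] * ?p"
    by simp
  from order_0_mult_pderiv_eq[OF this p0] k show ?thesis
    by simp
qed

lemma darboux_coeff_0_cofactor:
  assumes "darboux c f k" and "\<not> py dvd f"
  shows "poly (coeff k 0) 0 = of_nat (order 0 (coeff f 0))"
proof -
  have "[:0, 1:] * [:1, complex_of_real c:] * pderiv (coeff f 0) = coeff k 0 * coeff f 0"
    using assms(1) by (metis coeff_Zfield_0 coeff_mult_0 darboux_def)
  moreover have "coeff f 0 \<noteq> 0"
    using assms(2) by (simp add: py_dvd_iff_coeff_0_eq_0)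
  ultimately show ?thesis
    using order_0_mult_pderiv_eq by fastforce
qed

lemma darboux_eval_x0_cofactor_eq_0:
  assumes "darboux c f k" and "\<not> px dvd f" and "\<not> py dvd f"
  shows "eval_x0 k = 0"
proof -
  define m where "m = order 0 (eval_x0 f)"
  have "poly (coeff k 0) 0 = - of_nat m"
    using arg_cong[OF darboux_eval_x0_cofactor[OF assms(1,2)], of "\<lambda>p. coeff p 0"]
    by (simp add: m_def)
  with darboux_coeff_0_cofactor[OF assms(1,3)]
  have "of_nat (m + order 0 (coeff f 0)) = (0 :: complex)"
    by (metis neg_eq_iff_add_eq_0 of_nat_add)
  then have "m = 0"
    by (simp only: of_nat_eq_0_iff add_is_0)
  with darboux_eval_x0_cofactor[OF assms(1,2)] show ?thesis
    by (simp add: m_def)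
qed

lemma darboux_lead_coeff_const:
  assumes "darboux c f k" and "eval_x0 k = 0"
  shows "degree (lead_coeff f) = 0"
proof -
  define N where "N = degree f"
  have "k = [:coeff k 0, coeff k 1:]"
    using darboux_degree_cofactor_le[OF assms(1)]
    by (intro poly_eqI) (auto simp: coeff_pCons coeff_eq_0 split: nat.split)
  then obtain k0 k1 where k: "k = [:k0, k1:]"
    by blast
  have "poly k1 0 = 0"
    using arg_cong[OF assms(2), of "\<lambda>p. coeff p 1"] by (simp add: k)
  then obtain q where q: "k1 = [:0, 1:] * q"
    using dvd_iff_poly_eq_0[of 0 k1] by auto
  have "coeff (Zfield c f) (Suc N) = coeff (k * f) (Suc N)"
    using assms(1) by (simp add: darboux_def)
  then have "[:0, 1:] * (- pderiv (lead_coeff f)) = [:0, 1:] * (q * lead_coeff f)"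
    by (simp add: coeff_Zfield_Suc k q N_def coeff_eq_0 algebra_simps)
  then have "- pderiv (lead_coeff f) = q * lead_coeff f"
    by simp
  then have "lead_coeff f dvd pderiv (lead_coeff f)"
    by (metis dvd_minus_iff dvd_triv_right)
  then show ?thesis
    by simp
qed

lemma darboux_coprime_xy_eq_pconst:
  assumes "darboux c f k" and "\<not> px dvd f" and "\<not> py dvd f"
  shows "\<exists>a. f = pconst a"
proof -
  have k: "eval_x0 k = 0"
    using assms by (rule darboux_eval_x0_cofactor_eq_0)
  have "- [:0, 1:] * pderiv (eval_x0 f) = 0"
    using assms(1) by (metis darboux_def eval_x0_Zfield eval_x0_mult k mult_zero_left)
  then have "degree (eval_x0 f) = 0"
    by (simp add: pderiv_eq_0_iff)
  obtain a where a: "lead_coeff f = [:a:]"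
    using darboux_lead_coeff_const[OF assms(1) k] by (elim degree_eq_zeroE)
  moreover from this have "a \<noteq> 0"
    using assms(1) by (auto simp: darboux_def)
  ultimately have "coeff (eval_x0 f) (degree f) \<noteq> 0"
    by simp
  then have "degree f = 0"
    using le_degree \<open>degree (eval_x0 f) = 0\<close> by fastforce
  then have "f = [:[:a:]:]"
    using a by (metis degree_0_id)
  then show ?thesis
    by (auto simp: pconst_def)
qed

lemma is_unit_iff_pconst: "is_unit f \<longleftrightarrow> (\<exists>a. a \<noteq> 0 \<and> f = pconst a)"
  unfolding pconst_def is_unit_poly_iff[of f] is_unit_poly_iff by (auto simp: dvd_field_iff)

lemma not_is_unit_px: "\<not> is_unit px"
  by (auto simp: is_unit_iff_pconst px_def pconst_def)

lemma not_is_unit_py: "\<not> is_unit py"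
  by (auto simp: is_unit_iff_pconst py_def pconst_def)

lemma irreducible_dvd_imp_eq_pconst_mult:
  assumes "irreducible f" and "d dvd f" and "\<not> is_unit d"
  shows "\<exists>a. a \<noteq> 0 \<and> f = pconst a * d"
proof -
  obtain g where "f = d * g"
    using assms(2) ..
  moreover from this have "is_unit g"
    using assms irreducibleD by blast
  ultimately show ?thesis
    by (auto simp: is_unit_iff_pconst mult.commute)
qed

lemma irreducible_darboux_eq_pconst_mult_px_or_py:
  assumes "irreducible f" and "darboux c f k"
  shows "\<exists>a. a \<noteq> 0 \<and> (f = pconst a * px \<or> f = pconst a * py)"
proof -
  have "px dvd f \<or> py dvd f"
  proof (rule ccontr)
    assume "\<not> (px dvd f \<or> py dvd f)"
    then obtain a where "f = pconst a"
      using darboux_coprime_xy_eq_pconst[OF assms(2)] by blast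
    with assms(2) have "is_unit f"
      by (auto simp: is_unit_iff_pconst darboux_def pconst_def)
    with assms(1) show False
      by (simp add: irreducible_not_unit)
  qed
  then show ?thesis
  proof
    assume "px dvd f"
    then show ?thesis
      using irreducible_dvd_imp_eq_pconst_mult[OF assms(1) _ not_is_unit_px] by blast
  next
    assume "py dvd f"
    then show ?thesis
      using irreducible_dvd_imp_eq_pconst_mult[OF assms(1) _ not_is_unit_py] by blast
  qed
qed

lemma irreducible_pconst_mult_px: "a \<noteq> 0 \<Longrightarrow> irreducible (pconst a * px)"
  by (simp add: pconst_def px_def irreducible_const_poly_iff irreducible_linear_field_poly)

lemma irreducible_pconst_mult_py: "a \<noteq> 0 \<Longrightarrow> irreducible (pconst a * py)"
  by (simp add: pconst_def py_def irreducible_linear_poly_unit_lead is_unit_const_poly_iff dvd_field_iff)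

lemma darboux_pconst_mult_px:
  assumes "a \<noteq> 0"
  shows "\<exists>k. k \<noteq> 0 \<and> darboux c (pconst a * px) k"
proof (intro exI conjI)
  have "coeff (1 - py + pconst (complex_of_real c) * px) 1 = -1"
    by (simp add: py_def px_def pconst_def)
  then show "1 - py + pconst (complex_of_real c) * px \<noteq> 0"
    by (metis coeff_0 zero_neq_neg_one)
  have "pdx (pconst a * px) = pconst a" and "pdy (pconst a * px) = 0"
    by (simp_all add: pdx_def pdy_def pconst_def px_def map_poly_pCons pderiv_pCons)
  then show "darboux c (pconst a * px) (1 - py + pconst (complex_of_real c) * px)"
    using assms by (simp add: darboux_def Zfield_def algebra_simps px_def pconst_def)
qed

lemma darboux_pconst_mult_py:
  assumes "a \<noteq> 0"
  shows "\<exists>k. k \<noteq> 0 \<and> darboux c (pconst a * py) k"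
proof (intro exI conjI)
  have "coeff (coeff (-1 + px) 0) 1 = 1"
    by (simp add: px_def)
  then show "-1 + px \<noteq> 0"
    by (metis coeff_0 zero_neq_one)
  have "pdx (pconst a * py) = 0" and "pdy (pconst a * py) = pconst a"
    by (simp_all add: pdx_def pdy_def pconst_def py_def map_poly_pCons pderiv_pCons)
  then show "darboux c (pconst a * py) (-1 + px)"
    using assms by (simp add: darboux_def Zfield_def algebra_simps py_def pconst_def)
qed

theorem lemma3p2:
  fixes c :: real
  assumes "c \<ge> 0"
  shows "{f. irreducible f \<and> (\<exists>k. k \<noteq> 0 \<and> darboux c f k)}
         = {pconst a * px | a. a \<noteq> 0} \<union> {pconst a * py | a. a \<noteq> 0}"
proof (intro equalityI subsetI)
  fix f assume "f \<in> {f. irreducible f \<and> (\<exists>k. k \<noteq> 0 \<and> darboux c f k)}"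
  then show "f \<in> {pconst a * px | a. a \<noteq> 0} \<union> {pconst a * py | a. a \<noteq> 0}"
    using irreducible_darboux_eq_pconst_mult_px_or_py by blast
next
  fix f assume "f \<in> {pconst a * px | a. a \<noteq> 0} \<union> {pconst a * py | a. a \<noteq> 0}"
  then show "f \<in> {f. irreducible f \<and> (\<exists>k. k \<noteq> 0 \<and> darboux c f k)}"
    using irreducible_pconst_mult_px irreducible_pconst_mult_py
      darboux_pconst_mult_px darboux_pconst_mult_py by blast
qed

end
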